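(* Let $A=\sum_{\ell=0}^{2k}\sum_{|\underline{i}|=\ell}a_{\underline{i}}\,\overline{D}^{i_1}\otimes\cdots\otimes\overline{D}^{i_n}\in\mathfrak{D}^k_{\underline\lambda,\mu}$ and let $X_F\in\mathcal{K}(1)$, $F\in C^\infty_{\mathbb{C}}(S^{1|1})$. Then $\mathfrak{L}^{\underline\lambda,\mu}_{X_F}(A)=\sum_{\ell=0}^{2k}\sum_{|\underline{i}|=\ell}a^X_{\underline{i}}\,\overline{D}^{i_1}\otimes\cdots\otimes\overline{D}^{i_n}$, where, with $\delta=\mu-|\underline\lambda|$, $$a^X_{\underline{i}}=\mathfrak{L}^{\delta-\frac{|\underline{i}|}{2}}_{X_F}(a_{\underline{i}})-\sum_{r=1}^{2k-|\underline{i}|}(-1)^{r(|F|+|a_{\underline{i}+r\mathbf{1}_1}|)}\Big[\left(r+i_1\atop r+2\right)_s-\tfrac12(-1)^{i_1}\left(r+i_1\atop r+1\right)_s+\lambda_1\left(r+i_1\atop r\right)_s\Big]\overline{D}^r(F')\,a_{\underline{i}+r\mathbf{1}_1}$$ $$-\sum_{t=2}^n\sum_{r=1}^{2k-|\underline{i}|}(-1)^{r(|F|+|a_{\underline{i}+r\mathbf{1}_t}|+i_1+\dots+i_{t-1})}\Big[\left(r+i_t\atop r+2\right)_s-\tfrac12(-1)^{i_t}\left(r+i_t\atop r+1\right)_s+\lambda_t\left(r+i_t\atop r\right)_s\Big]\overline{D}^r(F')\,a_{\underline{i}+r\mathbf{1}_t}.$$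
   Context: The supercircle $S^{1|1}$ has function algebra $C^\infty_{\mathbb{C}}(S^{1|1})$ of elements $F=f_0(x)+\theta f_1(x)$ ($x$ even, $\theta$ odd, $\theta^2=0$); $F'=f_0'+\theta f_1'$, $|F|$ is the parity. $D=\partial_\theta+\theta\partial_x$, $\overline{D}=\partial_\theta-\theta\partial_x$, $\alpha=dx+\theta d\theta$. Contact vector fields: $X_f=-f\overline{D}^2+\frac12 D(f)\overline{D}$; they form $\mathcal{K}(1)$. $\mathfrak{F}_\lambda=\{G\alpha^\lambda\}$ with action $\mathfrak{L}^\lambda_{X_F}(G\alpha^\lambda)=(X_F(G)+\lambda F'G)\alpha^\lambda$ (the same formula $\mathfrak{L}^\lambda_{X_F}(G)=X_F(G)+\lambda F'G$ is applied to functions). On $\mathfrak{F}_{\lambda_1}\otimes\cdots\otimes\mathfrak{F}_{\lambda_n}$: $\mathfrak{L}^{\underline\lambda}_{X_F}(\Phi_1\otimes\cdots\otimes\Phi_n)=\sum_{p=1}^n(-1)^{|F|(|\Phi_1|+\dots+|\Phi_{p-1}|)}\Phi_1\otimes\cdots\otimes\mathfrak{L}^{\lambda_p}_{X_F}(\Phi_p)\otimes\cdots\otimes\Phi_n$. $\mathfrak{D}^k_{\underline\lambda,\mu}$ ($k\in\frac12\mathbb{N}$) is the space of operators $A=\sum_{|\underline{i}|\le 2k}a_{\underline{i}}\overline{D}^{i_1}\otimes\cdots\otimes\overline{D}^{i_n}$, $a_{\underline{i}}\in C^\infty_{\mathbb{C}}(S^{1|1})$, from $\mathfrak{F}_{\lambda_1}\otimes\cdots\otimes\mathfrak{F}_{\lambda_n}$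 to $\mathfrak{F}_\mu$, acting by $A(f_1\alpha^{\lambda_1}\otimes\cdots\otimes f_n\alpha^{\lambda_n})=\big(\sum_{\underline{i}}a_{\underline{i}}(-1)^{\sum_{p=1}^{n-1}|f_p|\sum_{s=p+1}^n i_s}\overline{D}^{i_1}(f_1)\cdots\overline{D}^{i_n}(f_n)\big)\alpha^\mu$, where $|\underline{i}|=i_1+\dots+i_n$, and $|\underline\lambda|=\lambda_1+\dots+\lambda_n$. The action is $\mathfrak{L}^{\underline\lambda,\mu}_{X_F}(A)=\mathfrak{L}^\mu_{X_F}\circ A-(-1)^{|A||F|}A\circ\mathfrak{L}^{\underline\lambda}_{X_F}$. $\mathbf{1}_t$ is the multi-index with $1$ in position $t$, $0$ elsewhere. Super binomial: $\left(j\atop i\right)_s=\left([j/2]\atop[i/2]\right)$ if $i$ is even or $j$ is odd, and $0$ otherwise, $[x]$ being the integer part. *)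

theory Defs
  imports "HOL-Analysis.Analysis" "HOL-Library.Function_Algebras"
begin

text \<open>An element F = f0(x) + theta f1(x) is represented as the pair (f0, f1) of
  complex-valued functions of the even variable x (2 pi-periodic, smooth).\<close>

type_synonym sfun = "(real \<Rightarrow> complex) \<times> (real \<Rightarrow> complex)"

definition vd :: "(real \<Rightarrow> complex) \<Rightarrow> (real \<Rightarrow> complex)" where
  "vd f = (\<lambda>x. vector_derivative f (at x))"

definition smooth_S1 :: "(real \<Rightarrow> complex) \<Rightarrow> bool" where
  "smooth_S1 f \<longleftrightarrow> (\<forall>m x. ((vd ^^ m) f) differentiable (at x)) \<and> (\<forall>x. f (x + 2 * pi) = f x)"

definition smooth_sf :: "sfun \<Rightarrow> bool" where
  "smooth_sf F \<longleftrightarrow> smooth_S1 (fst F) \<and> smooth_S1 (snd F)"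

text \<open>Homogeneous elements: parity 0 means F = f0 (even), parity 1 means F = theta f1 (odd).\<close>
definition has_parity :: "sfun \<Rightarrow> nat \<Rightarrow> bool" where
  "has_parity F p \<longleftrightarrow> (p = 0 \<and> snd F = (\<lambda>_. 0)) \<or> (p = 1 \<and> fst F = (\<lambda>_. 0))"

definition sone :: sfun where "sone = ((\<lambda>_. 1), (\<lambda>_. 0))"

text \<open>(f0 + theta f1)(g0 + theta g1) = f0 g0 + theta (f1 g0 + f0 g1), since theta^2 = 0.\<close>
definition smul :: "sfun \<Rightarrow> sfun \<Rightarrow> sfun" where
  "smul F G = ((\<lambda>x. fst F x * fst G x), (\<lambda>x. snd F x * fst G x + fst F x * snd G x))"

definition sscale :: "complex \<Rightarrow> sfun \<Rightarrow> sfun" where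
  "sscale c F = ((\<lambda>x. c * fst F x), (\<lambda>x. c * snd F x))"

definition sder :: "sfun \<Rightarrow> sfun" where
  "sder F = (vd (fst F), vd (snd F))"

text \<open>D = d/dtheta + theta d/dx ,  Dbar = d/dtheta - theta d/dx\<close>
definition sD :: "sfun \<Rightarrow> sfun" where
  "sD F = (snd F, vd (fst F))"

definition sDbar :: "sfun \<Rightarrow> sfun" where
  "sDbar F = (snd F, (\<lambda>x. - vd (fst F) x))"

definition Xact :: "sfun \<Rightarrow> sfun \<Rightarrow> sfun" where
  "Xact F G = - smul F (sDbar (sDbar G)) + sscale (1/2) (smul (sD F) (sDbar G))"

definition Lie :: "complex \<Rightarrow> sfun \<Rightarrow> sfun \<Rightarrow> sfun" where
  "Lie lam F G = Xact F G + sscale lam (smul (sder F) G)"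

text \<open>Multi-indices (i_1,...,i_n) are functions nat => nat vanishing outside {1..n};
  idx n l is the set of those with |i| = l.\<close>
definition idx :: "nat \<Rightarrow> nat \<Rightarrow> (nat \<Rightarrow> nat) set" where
  "idx n l = {i. (\<forall>p. (p < 1 \<or> n < p) \<longrightarrow> i p = 0) \<and> (\<Sum>p\<in>{1..n}. i p) = l}"

definition msize :: "nat \<Rightarrow> (nat \<Rightarrow> nat) \<Rightarrow> nat" where
  "msize n i = (\<Sum>p\<in>{1..n}. i p)"

definition sprod :: "nat \<Rightarrow> (nat \<Rightarrow> sfun) \<Rightarrow> sfun" where
  "sprod n g = foldr (\<lambda>p acc. smul (g p) acc) [1..<n+1] sone"

text \<open>Application of A = sum_{|i| <= K} a_i Dbar^{i_1} x ... x Dbar^{i_n} (K = 2k) to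
  homogeneous f_1,...,f_n with parities q_1,...,q_n.\<close>
definition opapp :: "nat \<Rightarrow> nat \<Rightarrow> ((nat \<Rightarrow> nat) \<Rightarrow> sfun) \<Rightarrow> (nat \<Rightarrow> nat) \<Rightarrow> (nat \<Rightarrow> sfun) \<Rightarrow> sfun" where
  "opapp n K a q f =
     (\<Sum>l\<in>{0..K}. \<Sum>i\<in>idx n l.
        sscale ((-1) ^ (\<Sum>p\<in>{1..n-1}. q p * (\<Sum>s\<in>{p+1..n}. i s)))
          (smul (a i) (sprod n (\<lambda>p. (sDbar ^^ i p) (f p)))))"

text \<open>The action L^{lambda,mu}_{X_F}(A) = L^mu_{X_F} o A - (-1)^{|A||F|} A o L^lambda_{X_F},
  evaluated on f_1 x ... x f_n.\<close>
definition opLie :: "nat \<Rightarrow> nat \<Rightarrow> (nat \<Rightarrow> complex) \<Rightarrow> complex \<Rightarrow> ((nat \<Rightarrow> nat) \<Rightarrow> sfun) \<Rightarrow> nat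
     \<Rightarrow> sfun \<Rightarrow> nat \<Rightarrow> (nat \<Rightarrow> nat) \<Rightarrow> (nat \<Rightarrow> sfun) \<Rightarrow> sfun" where
  "opLie n K lam mu a pA F pF q f =
     Lie mu F (opapp n K a q f)
     - sscale ((-1) ^ (pA * pF))
         (\<Sum>p\<in>{1..n}. sscale ((-1) ^ (pF * (\<Sum>s\<in>{1..<p}. q s)))
            (opapp n K a (q(p := q p + pF)) (f(p := Lie (lam p) F (f p)))))"

definition sbinom :: "nat \<Rightarrow> nat \<Rightarrow> nat" where
  "sbinom j i = (if even i \<or> odd j then (j div 2) choose (i div 2) else 0)"

definition bcoef :: "nat \<Rightarrow> nat \<Rightarrow> complex \<Rightarrow> complex" where
  "bcoef r i lam = of_nat (sbinom (r + i) (r + 2)) - (1/2) * (-1) ^ i * of_nat (sbinom (r + i) (r + 1))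
                   + lam * of_nat (sbinom (r + i) r)"

definition coefX :: "nat \<Rightarrow> nat \<Rightarrow> (nat \<Rightarrow> complex) \<Rightarrow> complex \<Rightarrow> ((nat \<Rightarrow> nat) \<Rightarrow> sfun)
     \<Rightarrow> ((nat \<Rightarrow> nat) \<Rightarrow> nat) \<Rightarrow> sfun \<Rightarrow> nat \<Rightarrow> (nat \<Rightarrow> nat) \<Rightarrow> sfun" where
  "coefX n K lam mu a pa F pF i =
     (let \<delta> = mu - (\<Sum>p\<in>{1..n}. lam p) in
      Lie (\<delta> - of_nat (msize n i) / 2) F (a i)
      - (\<Sum>r\<in>{1..K - msize n i}.
           sscale ((-1) ^ (r * (pF + pa (i(1 := i 1 + r)))) * bcoef r (i 1) (lam 1))
             (smul ((sDbar ^^ r) (sder F)) (a (i(1 := i 1 + r)))))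
      - (\<Sum>t\<in>{2..n}. \<Sum>r\<in>{1..K - msize n i}.
           sscale ((-1) ^ (r * (pF + pa (i(t := i t + r)) + (\<Sum>s\<in>{1..t-1}. i s))) * bcoef r (i t) (lam t))
             (smul ((sDbar ^^ r) (sder F)) (a (i(t := i t + r))))))"

end

theory Submission
  imports Defs
begin

(*
  A is a sum of monomials a_i Dbar^{i_1} (x) ... (x) Dbar^{i_n} and both sides are linear
  in A, so it suffices to treat one monomial applied to homogeneous f_1, ..., f_n.
  The Lie derivative satisfies a graded Leibniz rule for products. Splitting the weight as
  mu = (delta - |i|/2) + sum_p (lambda_p + i_p/2), the term where it hits a_i gives
  L^{delta - |i|/2}(a_i), and the term where it hits Dbar^{i_p} f_p is compared with
  Dbar^{i_p} L^{lambda_p}(f_p) through the commutation rule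
    Dbar^m L^l = (-1)^{m|F|} L^{l + m/2} Dbar^m + sum_r c_r Dbar^r(F') Dbar^{m-r},
  whose coefficients c_r satisfy a Pascal-type recursion solved by the super binomials.
  The leading terms cancel against A o L^lambda, and the remainders, reindexed by
  i -> i + r 1_t, are the sums in a^X_i. The signs agree because A is homogeneous, except
  in terms containing a product of two odd factors, which vanish.
*)

section \<open>Smooth functions on the real line\<close>

definition smooth_fun :: "(real \<Rightarrow> complex) \<Rightarrow> bool" where
  "smooth_fun u \<longleftrightarrow> (\<forall>m x. (vd ^^ m) u differentiable (at x))"

text \<open>Smoothness of products is proved order by order, since the \<open>m\<close>-th derivative of a
  product only involves derivatives of order at most \<open>m\<close> of the factors.\<close>

definition smooth_upto :: "nat \<Rightarrow> (real \<Rightarrow> complex) \<Rightarrow> bool" where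
  "smooth_upto m u \<longleftrightarrow> (\<forall>k<m. \<forall>x. (vd ^^ k) u differentiable (at x))"

lemma smooth_upto_0 [simp]: "smooth_upto 0 u"
  by (simp add: smooth_upto_def)

lemma smooth_upto_Suc:
  "smooth_upto (Suc m) u \<longleftrightarrow> (\<forall>x. u differentiable (at x)) \<and> smooth_upto m (vd u)"
  by (simp add: smooth_upto_def All_less_Suc2 funpow_Suc_right del: funpow.simps)

lemma smooth_fun_iff_upto: "smooth_fun u \<longleftrightarrow> (\<forall>m. smooth_upto m u)"
  by (auto simp: smooth_fun_def smooth_upto_def)

lemma vd_const: "vd (\<lambda>x. c) = (\<lambda>x. 0)"
  by (simp add: vd_def vector_derivative_const_at)

lemma vd_add:
  "(\<And>x. u differentiable (at x)) \<Longrightarrow> (\<And>x. v differentiable (at x)) \<Longrightarrow>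
   vd (\<lambda>x. u x + v x) = (\<lambda>x. vd u x + vd v x)"
  by (simp add: vd_def vector_derivative_add_at)

lemma vd_mult:
  "(\<And>x. u differentiable (at x)) \<Longrightarrow> (\<And>x. v differentiable (at x)) \<Longrightarrow>
   vd (\<lambda>x. u x * v x) = (\<lambda>x. vd u x * v x + u x * vd v x)"
  by (simp add: vd_def vector_derivative_mult_at fun_eq_iff algebra_simps)

lemma vd_cmult: "(\<And>x. u differentiable (at x)) \<Longrightarrow> vd (\<lambda>x. c * u x) = (\<lambda>x. c * vd u x)"
  using vd_mult[of "\<lambda>x. c" u] by (simp add: vd_const)

lemma vd_uminus: "(\<And>x. u differentiable (at x)) \<Longrightarrow> vd (\<lambda>x. - u x) = (\<lambda>x. - vd u x)"
  using vd_cmult[of u "-1"] by simp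

lemma vd_diff:
  "(\<And>x. u differentiable (at x)) \<Longrightarrow> (\<And>x. v differentiable (at x)) \<Longrightarrow>
   vd (\<lambda>x. u x - v x) = (\<lambda>x. vd u x - vd v x)"
  using vd_add[of u "\<lambda>x. - v x"] vd_uminus[of v] by simp

lemma vd_divide_const: "(\<And>x. u differentiable (at x)) \<Longrightarrow> vd (\<lambda>x. u x / c) = (\<lambda>x. vd u x / c)"
  using vd_cmult[of u "inverse c"] by (simp add: divide_inverse mult.commute)

lemma smooth_upto_add: "smooth_upto m u \<Longrightarrow> smooth_upto m v \<Longrightarrow> smooth_upto m (\<lambda>x. u x + v x)"
  by (induction m arbitrary: u v) (simp_all add: smooth_upto_Suc vd_add)

lemma smooth_upto_mult:
  "\<forall>m. smooth_upto m u \<Longrightarrow> \<forall>m. smooth_upto m v \<Longrightarrow> smooth_upto m (\<lambda>x. u x * v x)"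
proof (induction m arbitrary: u v)
  case 0
  then show ?case by simp
next
  case (Suc m)
  then have "\<forall>x. u differentiable (at x)" "\<forall>x. v differentiable (at x)"
    and "\<forall>m. smooth_upto m (vd u)" "\<forall>m. smooth_upto m (vd v)"
    by (metis smooth_upto_Suc)+
  with Suc show ?case by (simp add: smooth_upto_Suc vd_mult smooth_upto_add)
qed

lemma smooth_fun_differentiable: "smooth_fun u \<Longrightarrow> u differentiable (at x)"
  by (metis smooth_fun_def funpow_0)

lemma smooth_fun_vd: "smooth_fun u \<Longrightarrow> smooth_fun (vd u)"
  by (simp add: smooth_fun_iff_upto) (metis smooth_upto_Suc)

lemma smooth_fun_mult: "smooth_fun u \<Longrightarrow> smooth_fun v \<Longrightarrow> smooth_fun (\<lambda>x. u x * v x)"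
  by (simp add: smooth_fun_iff_upto smooth_upto_mult)

lemma smooth_fun_add: "smooth_fun u \<Longrightarrow> smooth_fun v \<Longrightarrow> smooth_fun (\<lambda>x. u x + v x)"
  by (simp add: smooth_fun_iff_upto smooth_upto_add)

lemma smooth_fun_const: "smooth_fun (\<lambda>x. c)"
proof -
  have "smooth_upto m (\<lambda>x. c)" for m
    by (induction m arbitrary: c) (simp_all add: smooth_upto_Suc vd_const)
  then show ?thesis by (simp add: smooth_fun_iff_upto)
qed

lemma smooth_fun_cmult: "smooth_fun u \<Longrightarrow> smooth_fun (\<lambda>x. c * u x)"
  by (rule smooth_fun_mult[OF smooth_fun_const])

lemma smooth_fun_uminus: "smooth_fun u \<Longrightarrow> smooth_fun (\<lambda>x. - u x)"
  using smooth_fun_cmult[of u "-1"] by simp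

lemma smooth_fun_diff: "smooth_fun u \<Longrightarrow> smooth_fun v \<Longrightarrow> smooth_fun (\<lambda>x. u x - v x)"
  using smooth_fun_add[of u "\<lambda>x. - v x"] smooth_fun_uminus[of v] by simp

lemma smooth_fun_divide_const: "smooth_fun u \<Longrightarrow> smooth_fun (\<lambda>x. u x / c)"
  using smooth_fun_cmult[of u "inverse c"] by (simp add: divide_inverse mult.commute)

lemmas smooth_fun_intros = smooth_fun_const smooth_fun_vd smooth_fun_mult smooth_fun_cmult
  smooth_fun_add smooth_fun_uminus smooth_fun_diff smooth_fun_divide_const

lemmas vd_simps = vd_const vd_add vd_mult vd_cmult vd_uminus vd_diff vd_divide_const
  smooth_fun_differentiable

section \<open>Superfunctions\<close>

text \<open>The computation is local, so the periodicity required by \<^const>\<open>smooth_sf\<close> is dropped.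
  Parities are arbitrary naturals read modulo 2, so that the parity of a product is a sum.\<close>

definition ssmooth :: "sfun \<Rightarrow> bool" where
  "ssmooth G \<longleftrightarrow> smooth_fun (fst G) \<and> smooth_fun (snd G)"

definition sparity :: "sfun \<Rightarrow> nat \<Rightarrow> bool" where
  "sparity G k \<longleftrightarrow> has_parity G (k mod 2)"

lemma smooth_sf_imp_ssmooth: "smooth_sf G \<Longrightarrow> ssmooth G"
  by (simp add: smooth_sf_def smooth_S1_def ssmooth_def smooth_fun_def)

lemma has_parity_imp_sparity: "has_parity G p \<Longrightarrow> sparity G p"
  by (auto simp: sparity_def has_parity_def)

lemmas sfun_defs = smul_def sscale_def sDbar_def sD_def sder_def Xact_def Lie_def sone_def
  plus_fun_def fun_diff_def fun_Compl_def zero_fun_def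

lemma ssmooth_smul: "ssmooth G \<Longrightarrow> ssmooth H \<Longrightarrow> ssmooth (smul G H)"
  and ssmooth_sscale: "ssmooth G \<Longrightarrow> ssmooth (sscale c G)"
  and ssmooth_sD: "ssmooth G \<Longrightarrow> ssmooth (sD G)"
  and ssmooth_sDbar: "ssmooth G \<Longrightarrow> ssmooth (sDbar G)"
  and ssmooth_sder: "ssmooth G \<Longrightarrow> ssmooth (sder G)"
  and ssmooth_add: "ssmooth G \<Longrightarrow> ssmooth H \<Longrightarrow> ssmooth (G + H)"
  and ssmooth_diff: "ssmooth G \<Longrightarrow> ssmooth H \<Longrightarrow> ssmooth (G - H)"
  and ssmooth_zero: "ssmooth 0"
  and ssmooth_sone: "ssmooth sone"
  by (simp_all add: ssmooth_def sfun_defs zero_prod_def smooth_fun_intros)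

lemma ssmooth_Lie: "ssmooth F \<Longrightarrow> ssmooth G \<Longrightarrow> ssmooth (Lie c F G)"
  by (simp add: Lie_def Xact_def ssmooth_smul ssmooth_sscale ssmooth_sD ssmooth_sDbar
      ssmooth_sder ssmooth_add ssmooth_diff)

lemma ssmooth_sDbar_pow: "ssmooth G \<Longrightarrow> ssmooth ((sDbar ^^ m) G)"
  by (induction m) (simp_all add: ssmooth_sDbar)

lemma ssmooth_sum: "(\<And>x. x \<in> A \<Longrightarrow> ssmooth (g x)) \<Longrightarrow> ssmooth (\<Sum>x\<in>A. g x)"
  by (induction A rule: infinite_finite_induct)
    (simp_all add: ssmooth_add ssmooth_zero)

lemma sparity_cases:
  "sparity G k \<longleftrightarrow> (\<exists>g. G = (g, \<lambda>_. 0) \<and> even k) \<or> (\<exists>g. G = (\<lambda>_. 0, g) \<and> odd k)"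
  by (cases G) (auto simp: sparity_def has_parity_def odd_iff_mod_2_eq_one even_iff_mod_2_eq_zero)

lemma sparity_smul: "sparity G a \<Longrightarrow> sparity H b \<Longrightarrow> sparity (smul G H) (a + b)"
  by (auto simp: sparity_cases smul_def)

lemma sparity_sDbar: "sparity G a \<Longrightarrow> sparity (sDbar G) (Suc a)"
  and sparity_sder: "sparity G a \<Longrightarrow> sparity (sder G) a"
  and sparity_sone: "sparity sone 0"
  by (auto simp: sparity_cases sfun_defs vd_const)

lemma sparity_sDbar_pow: "sparity G a \<Longrightarrow> sparity ((sDbar ^^ r) G) (a + r)"
  by (induction r) (simp_all add: sparity_sDbar)

lemma smul_odd_odd: "sparity G a \<Longrightarrow> sparity H b \<Longrightarrow> odd a \<Longrightarrow> odd b \<Longrightarrow> smul G H = 0"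
  by (auto simp: sparity_cases smul_def zero_prod_def zero_fun_def)

lemma smul_assoc: "smul (smul G H) L = smul G (smul H L)"
  and smul_sone [simp]: "smul sone G = G" "smul G sone = G"
  and smul_zero [simp]: "smul 0 G = 0" "smul G 0 = 0"
  and smul_add: "smul (G + H) L = smul G L + smul H L" "smul L (G + H) = smul L G + smul L H"
  and smul_diff: "smul (G - H) L = smul G L - smul H L"
  and smul_sscale: "smul (sscale c G) H = sscale c (smul G H)" "smul H (sscale c G) = sscale c (smul H G)"
  by (simp_all add: sfun_defs zero_prod_def algebra_simps)

lemma sscale_sscale [simp]: "sscale a (sscale b G) = sscale (a * b) G"
  and sscale_one [simp]: "sscale 1 G = G"
  and sscale_zero [simp]: "sscale 0 G = 0" "sscale c 0 = 0"
  and sscale_add: "sscale c (G + H) = sscale c G + sscale c H" "sscale (a + b) G = sscale a G + sscale b G"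
  and sscale_diff: "sscale c (G - H) = sscale c G - sscale c H"
  by (simp_all add: sfun_defs zero_prod_def algebra_simps)

lemma sscale_sum: "sscale c (\<Sum>x\<in>A. g x) = (\<Sum>x\<in>A. sscale c (g x))"
  by (induction A rule: infinite_finite_induct) (simp_all add: sscale_add)

lemma smul_sum: "smul (\<Sum>x\<in>A. g x) H = (\<Sum>x\<in>A. smul (g x) H)"
  "smul H (\<Sum>x\<in>A. g x) = (\<Sum>x\<in>A. smul H (g x))"
  by (induction A rule: infinite_finite_induct) (simp_all add: smul_add)

lemma sDbar_add: "ssmooth G \<Longrightarrow> ssmooth H \<Longrightarrow> sDbar (G + H) = sDbar G + sDbar H"
  and sDbar_sscale: "ssmooth G \<Longrightarrow> sDbar (sscale c G) = sscale c (sDbar G)"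
  and sDbar_zero: "sDbar 0 = 0"
  by (auto simp: ssmooth_def sfun_defs zero_prod_def vd_simps)

lemma sDbar_sum: "(\<And>x. x \<in> A \<Longrightarrow> ssmooth (g x)) \<Longrightarrow> sDbar (\<Sum>x\<in>A. g x) = (\<Sum>x\<in>A. sDbar (g x))"
  by (induction A rule: infinite_finite_induct) (simp_all add: sDbar_zero sDbar_add ssmooth_sum)

lemma Lie_add: "ssmooth G \<Longrightarrow> ssmooth H \<Longrightarrow> Lie c F (G + H) = Lie c F G + Lie c F H"
  by (simp add: Lie_def Xact_def sDbar_add ssmooth_sDbar smul_add sscale_add)

lemma Lie_sscale: "ssmooth G \<Longrightarrow> Lie c F (sscale a G) = sscale a (Lie c F G)"
  by (simp add: Lie_def Xact_def sDbar_sscale ssmooth_sDbar smul_sscale sscale_add sscale_diff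
      mult.commute)

lemma Lie_zero: "Lie c F 0 = 0"
  by (simp add: Lie_def Xact_def sDbar_zero)

lemma Lie_sum: "(\<And>x. x \<in> A \<Longrightarrow> ssmooth (g x)) \<Longrightarrow> Lie c F (\<Sum>x\<in>A. g x) = (\<Sum>x\<in>A. Lie c F (g x))"
  by (induction A rule: infinite_finite_induct) (simp_all add: Lie_zero Lie_add ssmooth_sum)

section \<open>Commuting \<open>Dbar^m\<close> with the Lie derivative\<close>

lemma sDbar_smul:
  assumes "ssmooth G" "ssmooth H" "sparity G a"
  shows "sDbar (smul G H) = smul (sDbar G) H + sscale ((-1)^a) (smul G (sDbar H))"
  using assms
  by (cases H) (auto simp: sparity_cases ssmooth_def sfun_defs vd_simps smooth_fun_intros algebra_simps)

lemma Lie_smul: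
  assumes "ssmooth F" "ssmooth G" "ssmooth H" "sparity F p" "sparity G a"
  shows "Lie (\<alpha> + \<beta>) F (smul G H) = smul (Lie \<alpha> F G) H + sscale ((-1)^(p*a)) (smul G (Lie \<beta> F H))"
  using assms
  by (cases H) (auto simp: sparity_cases ssmooth_def sfun_defs vd_simps smooth_fun_intros algebra_simps)

lemma sDbar_Lie:
  assumes "ssmooth F" "ssmooth G" "sparity F p"
  shows "sDbar (Lie \<nu> F G) = sscale ((-1)^p) (Lie (\<nu> + 1/2) F (sDbar G)) + sscale \<nu> (smul (sDbar (sder F)) G)"
  using assms
  by (cases G) (auto simp: sparity_cases ssmooth_def sfun_defs vd_simps smooth_fun_intros algebra_simps)

lemma bcoef_rec:
  assumes "1 \<le> r"
  shows "bcoef r i l =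
     (if 2 \<le> r then bcoef (r - 1) i l else 0)
     + (if 1 \<le> i then (-1)^r * bcoef r (i - 1) l else 0)
     + (if r = 1 then l + of_nat i / 2 else 0)"
proof -
  have "\<exists>a. r = 2*a + 1 \<or> r = 2*a + 2" "\<exists>b. i = 2*b \<or> i = 2*b + 1"
    using assms by presburger+
  then obtain a b where "r = 2*a + 1 \<or> r = 2*a + 2" and "i = 2*b \<or> i = 2*b + 1"
    by blast
  then show ?thesis
    by (elim disjE; cases a; cases b) (simp_all add: bcoef_def sbinom_def binomial_eq_0 field_simps)
qed

text \<open>The coefficient of \<open>Dbar^r(F') Dbar^(m-r)\<close> in \<open>Dbar^m \<circ> L^l_(X_F)\<close>.\<close>

definition dbar_lie_coef :: "nat \<Rightarrow> complex \<Rightarrow> nat \<Rightarrow> nat \<Rightarrow> complex" where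
  "dbar_lie_coef p l m r = (-1)^(p*(m-r)) * bcoef r (m-r) l"

lemma dbar_lie_coef_Suc:
  assumes "r \<in> {1..Suc m}"
  shows "dbar_lie_coef p l (Suc m) r =
     (if r = 1 then (-1)^(m*p) * (l + of_nat m / 2) else 0)
     + (if 2 \<le> r then dbar_lie_coef p l m (r - 1) else 0)
     + (if r \<le> m then (-1)^(p+r) * dbar_lie_coef p l m r else 0)"
proof (cases "r \<le> m")
  case True
  then obtain k where m: "m = r + k" using le_Suc_ex by blast
  have r: "1 \<le> r" using assms by simp
  have rec: "bcoef r (Suc k) l = (if 2 \<le> r then bcoef (r - 1) (Suc k) l else 0)
      + (-1)^r * bcoef r k l + (if r = 1 then l + of_nat (Suc k) / 2 else 0)"
    using bcoef_rec[OF r, of "Suc k" l] by simp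
  have diffs: "Suc m - r = Suc k" "m - (r - 1) = Suc k" "m - r = k" using m r by auto
  show ?thesis
  proof (cases "r = 1")
    case True
    define c :: complex where "c = (-1)^(p * Suc k)"
    have "(-1)^(m*p) = c" "(-1)^(p+r) * (-1)^(p*k) = - c"
      using True by (simp_all add: c_def m power_add mult.commute)
    moreover have "bcoef 1 (Suc k) l = l + of_nat (Suc k) / 2 - bcoef 1 k l"
      using True rec by simp
    ultimately show ?thesis
      using True diffs by (simp add: dbar_lie_coef_def c_def[symmetric] m field_simps)
        (metis distrib_left mult_1_right)
  next
    case False
    then show ?thesis
      using r rec diffs by (simp add: dbar_lie_coef_def power_add algebra_simps)
  qed
next
  case False
  then have "r = Suc m" using assms by simp
  then show ?thesis using bcoef_rec[of r 0 l] by (cases m) (simp_all add: dbar_lie_coef_def)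
qed

lemma dbar_lie_coef_sum_Suc:
  fixes T :: "nat \<Rightarrow> nat \<Rightarrow> sfun"
  shows "(\<Sum>r\<in>{1..Suc m}. sscale (dbar_lie_coef p l (Suc m) r) (T r (Suc m - r))) =
    sscale ((-1)^(m*p) * (l + of_nat m / 2)) (T 1 m)
    + (\<Sum>r\<in>{1..m}. sscale (dbar_lie_coef p l m r) (T (Suc r) (m - r)))
    + (\<Sum>r\<in>{1..m}. sscale ((-1)^(p+r) * dbar_lie_coef p l m r) (T r (Suc (m - r))))"
proof -
  have "(\<Sum>r\<in>{1..Suc m}. sscale (dbar_lie_coef p l (Suc m) r) (T r (Suc m - r))) =
     (\<Sum>r\<in>{1..Suc m}. (if r = 1 then sscale ((-1)^(m*p) * (l + of_nat m / 2)) (T 1 m) else 0)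
        + (if 2 \<le> r then sscale (dbar_lie_coef p l m (r - 1)) (T r (Suc m - r)) else 0)
        + (if r \<le> m then sscale ((-1)^(p+r) * dbar_lie_coef p l m r) (T r (Suc (m - r))) else 0))"
  proof (rule sum.cong[OF refl], goal_cases)
    case (1 r)
    then show ?case
      by (cases "r = 1") (simp_all add: dbar_lie_coef_Suc sscale_add Suc_diff_le)
  qed
  also have "\<dots> = sscale ((-1)^(m*p) * (l + of_nat m / 2)) (T 1 m)
      + (\<Sum>r\<in>{2..Suc m}. sscale (dbar_lie_coef p l m (r - 1)) (T r (Suc m - r)))
      + (\<Sum>r\<in>{1..m}. sscale ((-1)^(p+r) * dbar_lie_coef p l m r) (T r (Suc (m - r))))"
  proof -
    have "{r \<in> {1..Suc m}. 2 \<le> r} = {2..Suc m}" "{r \<in> {1..Suc m}. r \<le> m} = {1..m}" by auto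
    moreover have "(\<Sum>r\<in>{1..Suc m}. if r = 1 then X else 0) = X" for X :: sfun
      by simp
    ultimately show ?thesis
      by (simp only: sum.distrib sum.inter_filter[symmetric, OF finite_atLeastAtMost])
  qed
  also have "(\<Sum>r\<in>{2..Suc m}. sscale (dbar_lie_coef p l m (r - 1)) (T r (Suc m - r)))
      = (\<Sum>r\<in>{1..m}. sscale (dbar_lie_coef p l m r) (T (Suc r) (m - r)))"
    by (simp only: numeral_2_eq_2 sum.shift_bounds_cl_Suc_ivl) simp
  finally show ?thesis .
qed

lemma sDbar_pow_Lie:
  assumes F: "ssmooth F" "sparity F p" and G: "ssmooth G"
  shows "(sDbar ^^ m) (Lie l F G) = sscale ((-1)^(m*p)) (Lie (l + of_nat m / 2) F ((sDbar ^^ m) G))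
     + (\<Sum>r\<in>{1..m}. sscale (dbar_lie_coef p l m r) (smul ((sDbar ^^ r) (sder F)) ((sDbar ^^ (m - r)) G)))"
proof (induction m)
  case 0
  then show ?case by simp
next
  case (Suc m)
  define T where "T r k = smul ((sDbar ^^ r) (sder F)) ((sDbar ^^ k) G)" for r k
  have smooth_T: "ssmooth (T r k)" for r k
    by (simp add: T_def ssmooth_smul ssmooth_sDbar_pow ssmooth_sder F G)
  have sDbar_T: "sDbar (T r k) = T (Suc r) k + sscale ((-1)^(p+r)) (T r (Suc k))" for r k
    unfolding T_def
    by (subst sDbar_smul[where a="p + r"])
      (simp_all add: ssmooth_sDbar_pow ssmooth_sder sparity_sDbar_pow sparity_sder F G)
  have sDbar_Lie_m: "sDbar (Lie (l + of_nat m / 2) F ((sDbar ^^ m) G)) =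
      sscale ((-1)^p) (Lie (l + of_nat (Suc m) / 2) F ((sDbar ^^ Suc m) G))
      + sscale (l + of_nat m / 2) (T 1 m)"
  proof -
    have half: "l + of_nat m / 2 + 1 / 2 = l + of_nat (Suc m) / (2::complex)"
      by (simp add: field_simps)
    show ?thesis
      by (simp add: sDbar_Lie[OF F(1) _ F(2)] ssmooth_sDbar_pow G T_def half del: of_nat_Suc)
  qed
  have "(sDbar ^^ Suc m) (Lie l F G) =
      sscale ((-1)^(m*p)) (sDbar (Lie (l + of_nat m / 2) F ((sDbar ^^ m) G)))
      + (\<Sum>r\<in>{1..m}. sscale (dbar_lie_coef p l m r) (sDbar (T r (m - r))))"
    by (simp add: Suc.IH T_def[symmetric] sDbar_add sDbar_sscale sDbar_sum ssmooth_sscale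
        ssmooth_sum ssmooth_Lie ssmooth_sDbar_pow F G smooth_T)
  also have "\<dots> = sscale ((-1)^(Suc m*p)) (Lie (l + of_nat (Suc m) / 2) F ((sDbar ^^ Suc m) G))
      + (sscale ((-1)^(m*p) * (l + of_nat m / 2)) (T 1 m)
      + (\<Sum>r\<in>{1..m}. sscale (dbar_lie_coef p l m r) (T (Suc r) (m - r)))
      + (\<Sum>r\<in>{1..m}. sscale ((-1)^(p+r) * dbar_lie_coef p l m r) (T r (Suc (m - r)))))"
  proof -
    have "sscale ((-1)^(m*p)) (sDbar (Lie (l + of_nat m / 2) F ((sDbar ^^ m) G))) =
        sscale ((-1)^(Suc m*p)) (Lie (l + of_nat (Suc m) / 2) F ((sDbar ^^ Suc m) G))
        + sscale ((-1)^(m*p) * (l + of_nat m / 2)) (T 1 m)"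
      by (simp add: sDbar_Lie_m sscale_add(1) power_add mult.commute)
    moreover have "(\<Sum>r\<in>{1..m}. sscale (dbar_lie_coef p l m r) (sDbar (T r (m - r)))) =
        (\<Sum>r\<in>{1..m}. sscale (dbar_lie_coef p l m r) (T (Suc r) (m - r)))
        + (\<Sum>r\<in>{1..m}. sscale ((-1)^(p+r) * dbar_lie_coef p l m r) (T r (Suc (m - r))))"
      by (simp add: sDbar_T sscale_add(1) sum.distrib mult.commute)
    ultimately show ?thesis by (simp only: add.assoc)
  qed
  also have "\<dots> = sscale ((-1)^(Suc m*p)) (Lie (l + of_nat (Suc m) / 2) F ((sDbar ^^ Suc m) G))
      + (\<Sum>r\<in>{1..Suc m}. sscale (dbar_lie_coef p l (Suc m) r) (T r (Suc m - r)))"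
    by (simp only: dbar_lie_coef_sum_Suc)
  finally show ?case by (simp only: T_def)
qed

definition sprod_list :: "nat list \<Rightarrow> (nat \<Rightarrow> sfun) \<Rightarrow> sfun" where
  "sprod_list xs g = foldr (\<lambda>p acc. smul (g p) acc) xs sone"

lemma sprod_list_simps [simp]:
  "sprod_list [] g = sone" "sprod_list (x # xs) g = smul (g x) (sprod_list xs g)"
  by (simp_all add: sprod_list_def)

lemma sprod_list_append: "sprod_list (xs @ ys) g = smul (sprod_list xs g) (sprod_list ys g)"
  by (induction xs) (simp_all add: smul_assoc)

lemma sprod_list_cong: "(\<And>x. x \<in> set xs \<Longrightarrow> g x = h x) \<Longrightarrow> sprod_list xs g = sprod_list xs h"
  by (induction xs) auto

lemma ssmooth_sprod_list: "(\<And>x. x \<in> set xs \<Longrightarrow> ssmooth (g x)) \<Longrightarrow> ssmooth (sprod_list xs g)"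
  by (induction xs) (auto simp: ssmooth_smul ssmooth_sone)

lemma sparity_sprod_list:
  "(\<And>x. x \<in> set xs \<Longrightarrow> sparity (g x) (par x)) \<Longrightarrow> sparity (sprod_list xs g) (sum_list (map par xs))"
  by (induction xs) (auto simp: sparity_smul sparity_sone)

lemma sprod_eq_sprod_list: "sprod n g = sprod_list [1..<n+1] g"
  by (simp add: sprod_def sprod_list_def)

lemma sprod_Suc: "sprod (Suc n) g = smul (sprod n g) (g (Suc n))"
  by (simp add: sprod_eq_sprod_list sprod_list_append)

lemma sprod_cong: "(\<And>s. s \<in> {1..n} \<Longrightarrow> g s = h s) \<Longrightarrow> sprod n g = sprod n h"
  unfolding sprod_eq_sprod_list by (rule sprod_list_cong) auto

lemma sprod_split:
  assumes "p \<in> {1..n}"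
  shows "sprod n g = smul (sprod_list [1..<p] g) (smul (g p) (sprod_list [Suc p..<n+1] g))"
proof -
  have "[1..<n+1] = [1..<p] @ p # [Suc p..<n+1]"
    using assms upt_add_eq_append[of 1 p "n + 1 - p"] by (simp add: upt_conv_Cons)
  then show ?thesis by (simp only: sprod_eq_sprod_list sprod_list_append sprod_list_simps)
qed

lemma sprod_fun_upd_smul:
  assumes "p \<in> {1..n}"
  shows "sprod n (g(p := smul X Y)) = smul X (sprod n (g(p := Y)))"
proof -
  have "sprod_list [1..<p] (g(p := Z)) = sprod_list [1..<p] g"
    and "sprod_list [Suc p..<n+1] (g(p := Z)) = sprod_list [Suc p..<n+1] g" for Z
    by (rule sprod_list_cong; simp del: upt_Suc)+
  then show ?thesis
    by (simp add: sprod_split[OF assms] smul_def algebra_simps)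
qed

lemma sprod_fun_upd:
  assumes "p \<in> {1..n}"
  shows "sprod n (g(p := X)) = smul X (sprod n (g(p := sone)))"
  using sprod_fun_upd_smul[OF assms, of g X sone] by simp

lemma sprod_fun_upd_add:
  assumes p: "p \<in> {1..n}"
  shows "sprod n (g(p := X + Y)) = sprod n (g(p := X)) + sprod n (g(p := Y))"
  by (subst (1 2 3) sprod_fun_upd[OF p]) (rule smul_add(1))

lemma sprod_fun_upd_sscale:
  assumes p: "p \<in> {1..n}"
  shows "sprod n (g(p := sscale c X)) = sscale c (sprod n (g(p := X)))"
  by (subst (1 2) sprod_fun_upd[OF p]) (rule smul_sscale(1))

lemma sprod_fun_upd_sum:
  assumes p: "p \<in> {1..n}"
  shows "sprod n (g(p := \<Sum>x\<in>A. h x)) = (\<Sum>x\<in>A. sprod n (g(p := h x)))"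
  by (subst sprod_fun_upd[OF p]) (simp add: smul_sum(1) sprod_fun_upd[OF p, of g "h _", symmetric])

lemma ssmooth_sprod: "(\<And>s. s \<in> {1..n} \<Longrightarrow> ssmooth (g s)) \<Longrightarrow> ssmooth (sprod n g)"
  unfolding sprod_eq_sprod_list by (rule ssmooth_sprod_list) auto

lemma sparity_sprod:
  "(\<And>s. s \<in> {1..n} \<Longrightarrow> sparity (g s) (par s)) \<Longrightarrow> sparity (sprod n g) (\<Sum>s\<in>{1..n}. par s)"
proof -
  have "(\<Sum>s\<in>{1..n}. par s) = sum_list (map par [1..<n+1])"
    by (simp only: Suc_eq_plus1[symmetric] atLeastLessThanSuc_atLeastAtMost[symmetric]
        set_upt[symmetric] sum_set_upt_conv_sum_list_nat)
  moreover assume "\<And>s. s \<in> {1..n} \<Longrightarrow> sparity (g s) (par s)"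
  then have "sparity (sprod_list [1..<n+1] g) (sum_list (map par [1..<n+1]))"
    by (intro sparity_sprod_list) auto
  ultimately show ?thesis by (simp only: sprod_eq_sprod_list)
qed

lemma Lie_sprod:
  assumes F: "ssmooth F" "sparity F pF"
    and h: "\<And>s. s \<in> {1..n} \<Longrightarrow> ssmooth (h s) \<and> sparity (h s) (par s)"
  shows "Lie (\<Sum>s\<in>{1..n}. \<nu> s) F (sprod n h) =
    (\<Sum>p\<in>{1..n}. sscale ((-1)^(pF * (\<Sum>s\<in>{1..<p}. par s))) (sprod n (h(p := Lie (\<nu> p) F (h p)))))"
  using h
proof (induction n)
  case 0
  then show ?case by (simp add: sprod_def sfun_defs vd_const zero_prod_def)
next
  case (Suc n)
  have hs: "ssmooth (h s)" "sparity (h s) (par s)" if "s \<in> {1..Suc n}" for s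
    using Suc.prems that by auto
  have smooth_n: "ssmooth (sprod n h)" by (rule ssmooth_sprod) (simp add: hs)
  have parity_n: "sparity (sprod n h) (\<Sum>s\<in>{1..<Suc n}. par s)"
    using sparity_sprod[of n h par] hs by (simp add: atLeastLessThanSuc_atLeastAtMost)
  have IH: "Lie (\<Sum>s\<in>{1..n}. \<nu> s) F (sprod n h) =
      (\<Sum>p\<in>{1..n}. sscale ((-1)^(pF * (\<Sum>s\<in>{1..<p}. par s))) (sprod n (h(p := Lie (\<nu> p) F (h p)))))"
    by (rule Suc.IH) (simp add: hs)
  have upd_last: "sprod n (h(Suc n := X)) = sprod n h" for X
    by (rule sprod_cong) simp
  have upd_first: "sprod (Suc n) (h(p := X)) = smul (sprod n (h(p := X))) (h (Suc n))"
    if "p \<in> {1..n}" for p X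
    using that by (simp add: sprod_Suc)
  have "Lie (\<Sum>s\<in>{1..Suc n}. \<nu> s) F (sprod (Suc n) h) =
     smul (Lie (\<Sum>s\<in>{1..n}. \<nu> s) F (sprod n h)) (h (Suc n))
     + sscale ((-1)^(pF * (\<Sum>s\<in>{1..<Suc n}. par s))) (smul (sprod n h) (Lie (\<nu> (Suc n)) F (h (Suc n))))"
    by (simp add: sprod_Suc Lie_smul[OF F(1) smooth_n _ F(2) parity_n] hs)
  also have "\<dots> = (\<Sum>p\<in>{1..n}. sscale ((-1)^(pF * (\<Sum>s\<in>{1..<p}. par s))) (sprod (Suc n) (h(p := Lie (\<nu> p) F (h p)))))
     + sscale ((-1)^(pF * (\<Sum>s\<in>{1..<Suc n}. par s))) (sprod (Suc n) (h(Suc n := Lie (\<nu> (Suc n)) F (h (Suc n)))))"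
    unfolding IH using upd_first by (simp add: smul_sum smul_sscale sprod_Suc upd_last)
  also have "\<dots> = (\<Sum>p\<in>{1..Suc n}. sscale ((-1)^(pF * (\<Sum>s\<in>{1..<p}. par s))) (sprod (Suc n) (h(p := Lie (\<nu> p) F (h p)))))"
    by simp
  finally show ?case .
qed

definition idx_le :: "nat \<Rightarrow> nat \<Rightarrow> (nat \<Rightarrow> nat) set" where
  "idx_le n K = {i. (\<forall>p. (p < 1 \<or> n < p) \<longrightarrow> i p = 0) \<and> msize n i \<le> K}"

lemma mem_idx_le: "i \<in> idx_le n K \<longleftrightarrow> (\<forall>p. p \<notin> {1..n} \<longrightarrow> i p = 0) \<and> msize n i \<le> K"
proof -
  have "(p < 1 \<or> n < p) \<longleftrightarrow> p \<notin> {1..n}" for p by auto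
  then show ?thesis by (simp add: idx_le_def)
qed

text \<open>The Koszul sign of \<^const>\<open>opapp\<close>, coming from moving \<open>Dbar^(i_s)\<close> past \<open>f_p\<close>
  for \<open>p < s\<close>.\<close>

definition koszul_exp :: "nat \<Rightarrow> (nat \<Rightarrow> nat) \<Rightarrow> (nat \<Rightarrow> nat) \<Rightarrow> nat" where
  "koszul_exp n q i = (\<Sum>p\<in>{1..n-1}. q p * (\<Sum>s\<in>{p+1..n}. i s))"

definition dbar_tuple :: "(nat \<Rightarrow> nat) \<Rightarrow> (nat \<Rightarrow> sfun) \<Rightarrow> nat \<Rightarrow> sfun" where
  "dbar_tuple i f = (\<lambda>p. (sDbar ^^ i p) (f p))"

definition opterm :: "nat \<Rightarrow> (nat \<Rightarrow> nat) \<Rightarrow> (nat \<Rightarrow> sfun) \<Rightarrow> (nat \<Rightarrow> nat) \<Rightarrow> sfun \<Rightarrow> sfun" where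
  "opterm n q f i b = sscale ((-1)^(koszul_exp n q i)) (smul b (sprod n (dbar_tuple i f)))"

lemma component_le_msize: "p \<in> {1..n} \<Longrightarrow> i p \<le> msize n i"
  unfolding msize_def by (rule member_le_sum) auto

lemma finite_idx_le: "finite (idx_le n K)"
proof (rule finite_subset)
  show "idx_le n K \<subseteq> {i. \<forall>x. (x \<in> {1..n} \<longrightarrow> i x \<in> {0..K}) \<and> (x \<notin> {1..n} \<longrightarrow> i x = 0)}"
    by (auto simp: mem_idx_le intro: order_trans[OF component_le_msize])
  show "finite {i. \<forall>x. (x \<in> {1..n} \<longrightarrow> i x \<in> {0..K}) \<and> (x \<notin> {1..n} \<longrightarrow> i x = (0::nat))}"
    by (rule finite_set_of_finite_funs) auto
qed

lemma opapp_eq_sum_opterm: "opapp n K a q f = (\<Sum>i\<in>idx_le n K. opterm n q f i (a i))"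
proof -
  have idx_le_UN: "idx_le n K = (\<Union>l\<in>{0..K}. idx n l)"
    by (auto simp: idx_def idx_le_def msize_def)
  have "opapp n K a q f = (\<Sum>l\<in>{0..K}. \<Sum>i\<in>idx n l. opterm n q f i (a i))"
    unfolding opapp_def opterm_def koszul_exp_def dbar_tuple_def ..
  also have "\<dots> = (\<Sum>i\<in>idx_le n K. opterm n q f i (a i))"
    unfolding idx_le_UN
    by (rule sum.UNION_disjoint[symmetric])
      (use finite_idx_le[of n K] in \<open>auto simp: idx_le_UN idx_def intro: finite_subset\<close>)
  finally show ?thesis .
qed

lemma opterm_diff: "opterm n q f i (x - y) = opterm n q f i x - opterm n q f i y"
  and opterm_sum: "opterm n q f i (\<Sum>z\<in>A. h z) = (\<Sum>z\<in>A. opterm n q f i (h z))"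
  by (simp_all add: opterm_def smul_add smul_diff smul_sum sscale_add sscale_diff sscale_sum)

lemma msize_fun_upd:
  assumes "t \<in> {1..n}"
  shows "msize n (i(t := v)) = msize n i - i t + v"
proof -
  have "msize n (i(t := v)) = v + (\<Sum>p\<in>{1..n} - {t}. i p)"
    unfolding msize_def using assms by (simp add: sum.remove)
  moreover have "msize n i = i t + (\<Sum>p\<in>{1..n} - {t}. i p)"
    unfolding msize_def using assms by (simp add: sum.remove)
  ultimately show ?thesis by simp
qed

lemma sum_idx_le_shift:
  assumes t: "t \<in> {1..n}"
  shows "(\<Sum>i\<in>idx_le n K. \<Sum>r\<in>{1..K - msize n i}. H i r) =
         (\<Sum>j\<in>idx_le n K. \<Sum>r\<in>{1..j t}. H (j(t := j t - r)) r)"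
proof -
  let ?S = "Sigma (idx_le n K) (\<lambda>i. {1..K - msize n i})"
  let ?T = "Sigma (idx_le n K) (\<lambda>j. {1..j t})"
  have shift_up: "(i(t := i t + r), r) \<in> ?T" if "(i, r) \<in> ?S" for i r
  proof -
    have "i t \<le> msize n i" by (rule component_le_msize[OF t])
    with that t show ?thesis by (auto simp: mem_idx_le msize_fun_upd)
  qed
  have shift_down: "(j(t := j t - r), r) \<in> ?S" if "(j, r) \<in> ?T" for j r
  proof -
    have "j t \<le> msize n j" by (rule component_le_msize[OF t])
    with that t show ?thesis by (auto simp: mem_idx_le msize_fun_upd)
  qed
  have "(\<Sum>(i, r)\<in>?S. H i r) = (\<Sum>(j, r)\<in>?T. H (j(t := j t - r)) r)"
    by (rule sum.reindex_bij_witness[where i="\<lambda>(j, r). (j(t := j t - r), r)"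
          and j="\<lambda>(i, r). (i(t := i t + r), r)"])
      (use shift_up shift_down in auto)
  then show ?thesis by (simp add: sum.Sigma finite_idx_le)
qed

lemma koszul_exp_swap: "koszul_exp n q i = (\<Sum>s\<in>{1..n}. (\<Sum>p\<in>{1..<s}. q p) * i s)"
proof -
  have "koszul_exp n q i = (\<Sum>p\<in>{1..n-1}. \<Sum>s\<in>{s \<in> {1..n}. p < s}. q p * i s)"
    unfolding koszul_exp_def sum_distrib_left by (intro sum.cong) auto
  also have "\<dots> = (\<Sum>s\<in>{1..n}. \<Sum>p\<in>{p \<in> {1..n-1}. p < s}. q p * i s)"
    by (rule sum.swap_restrict) auto
  also have "\<dots> = (\<Sum>s\<in>{1..n}. (\<Sum>p\<in>{1..<s}. q p) * i s)"
    unfolding sum_distrib_right by (intro sum.cong) auto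
  finally show ?thesis .
qed

lemma koszul_exp_lower_index:
  assumes p: "p \<in> {1..n}" and r: "r \<le> j p"
  shows "koszul_exp n q j = koszul_exp n q (j(p := j p - r)) + (\<Sum>s\<in>{1..<p}. q s) * r"
proof -
  have rest: "(\<Sum>s\<in>{1..n} - {p}. (\<Sum>p\<in>{1..<s}. q p) * (j(p := j p - r)) s)
      = (\<Sum>s\<in>{1..n} - {p}. (\<Sum>p\<in>{1..<s}. q p) * j s)"
    by (rule sum.cong) auto
  have "(\<Sum>s\<in>{1..<p}. q s) * j p = (\<Sum>s\<in>{1..<p}. q s) * (j p - r) + (\<Sum>s\<in>{1..<p}. q s) * r"
    using r by (simp add: add_mult_distrib2[symmetric])
  then show ?thesis
    using p by (simp add: koszul_exp_swap sum.remove rest)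
qed

lemma koszul_exp_raise_parity:
  assumes p: "p \<in> {1..n}"
  shows "koszul_exp n (q(p := q p + c)) j = koszul_exp n q j + c * (\<Sum>s\<in>{p+1..n}. j s)"
proof -
  have "koszul_exp n (q(p := q p + c)) j = (\<Sum>p'\<in>{1..n-1}. q p' * (\<Sum>s\<in>{p'+1..n}. j s)
      + (if p' = p then c * (\<Sum>s\<in>{p'+1..n}. j s) else 0))"
    unfolding koszul_exp_def by (rule sum.cong) (auto simp: algebra_simps)
  also have "\<dots> = koszul_exp n q j + (if p \<le> n - 1 then c * (\<Sum>s\<in>{p+1..n}. j s) else 0)"
    using p by (simp add: sum.distrib koszul_exp_def)
  also have "\<dots> = koszul_exp n q j + c * (\<Sum>s\<in>{p+1..n}. j s)"
    using p by auto
  finally show ?thesis .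
qed

lemma msize_split:
  assumes p: "p \<in> {1..n}"
  shows "msize n j = (\<Sum>s\<in>{1..<p}. j s) + j p + (\<Sum>s\<in>{p+1..n}. j s)"
proof -
  have "{1..n} = {1..<p} \<union> {p..n}" using p by auto
  then have "msize n j = (\<Sum>s\<in>{1..<p}. j s) + (\<Sum>s\<in>{p..n}. j s)"
    unfolding msize_def by (simp add: sum.union_disjoint ivl_disj_int)
  moreover have "(\<Sum>s\<in>{p..n}. j s) = j p + (\<Sum>s\<in>{p+1..n}. j s)"
    using p by (simp add: sum.atLeast_Suc_atMost)
  ultimately show ?thesis by simp
qed

lemma ssmooth_dbar_tuple: "ssmooth (f p) \<Longrightarrow> ssmooth (dbar_tuple j f p)"
  by (simp add: dbar_tuple_def ssmooth_sDbar_pow)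

lemma sparity_dbar_tuple: "sparity (f p) (q p) \<Longrightarrow> sparity (dbar_tuple j f p) (q p + j p)"
  by (simp add: dbar_tuple_def sparity_sDbar_pow)

lemma dbar_tuple_fun_upd:
  "dbar_tuple j (f(p := X)) = (dbar_tuple j f)(p := (sDbar ^^ j p) X)"
  "dbar_tuple (j(p := v)) f = (dbar_tuple j f)(p := (sDbar ^^ v) (f p))"
  by (auto simp: dbar_tuple_def)

section \<open>The action on a single monomial\<close>

lemma neg_one_power_eq: "even a \<longleftrightarrow> even b \<Longrightarrow> (-1::complex)^a = (-1)^b"
  by (simp add: minus_one_power_iff)

lemma opterm_zero: "opterm n q f j 0 = 0"
  by (simp add: opterm_def)

lemma slot_main_sign:
  assumes p: "p \<in> {1..n}" and hom: "(pb + msize n j) mod 2 = pA"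
  shows "(-1::complex)^(pA * pF) * (-1)^(pF * (\<Sum>s\<in>{1..<p}. q s))
      * (-1)^(koszul_exp n q j + pF * (\<Sum>s\<in>{p+1..n}. j s) + j p * pF)
    = (-1)^(koszul_exp n q j + pF * pb + pF * (\<Sum>s\<in>{1..<p}. q s + j s))"
proof -
  have "pA = (pb + ((\<Sum>s\<in>{1..<p}. j s) + j p + (\<Sum>s\<in>{p+1..n}. j s))) mod 2"
    using hom msize_split[OF p] by simp
  then show ?thesis
    unfolding power_add[symmetric] by (intro neg_one_power_eq) (auto simp: sum.distrib)
qed

lemma slot_remainder_sign:
  assumes p: "p \<in> {1..n}" and r: "r \<le> j p" and hom: "(pb + msize n j) mod 2 = pA"
    and not_odd: "\<not> (odd (pF + r) \<and> odd (pb + (\<Sum>s\<in>{1..<p}. q s + j s)))"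
  shows "(-1::complex)^(pA * pF) * (-1)^(pF * (\<Sum>s\<in>{1..<p}. q s))
      * ((-1)^(koszul_exp n q j + pF * (\<Sum>s\<in>{p+1..n}. j s)) * dbar_lie_coef pF l (j p) r)
    = (-1)^(koszul_exp n q (j(p := j p - r))) * ((-1)^(r * (pF + pb + (\<Sum>s\<in>{1..<p}. j s))) * bcoef r (j p - r) l)"
proof -
  have "pA = (pb + ((\<Sum>s\<in>{1..<p}. j s) + j p + (\<Sum>s\<in>{p+1..n}. j s))) mod 2"
    using hom msize_split[OF p] by simp
  moreover have "(-1::complex)^(pA * pF + pF * (\<Sum>s\<in>{1..<p}. q s) + (koszul_exp n q (j(p := j p - r))
        + (\<Sum>s\<in>{1..<p}. q s) * r + pF * (\<Sum>s\<in>{p+1..n}. j s)) + pF * (j p - r))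
      = (-1)^(koszul_exp n q (j(p := j p - r)) + r * (pF + pb + (\<Sum>s\<in>{1..<p}. j s)))"
    using calculation r not_odd by (intro neg_one_power_eq) (auto simp: sum.distrib)
  ultimately show ?thesis
    using koszul_exp_lower_index[where j = j and q = q, OF p r]
    by (simp add: dbar_lie_coef_def power_add mult.assoc)
qed

context
  fixes n :: nat and F :: sfun and pF :: nat and q :: "nat \<Rightarrow> nat" and f :: "nat \<Rightarrow> sfun"
  assumes F_smooth: "ssmooth F" and F_parity: "sparity F pF"
    and f_smooth: "\<And>p. p \<in> {1..n} \<Longrightarrow> ssmooth (f p)"
    and f_parity: "\<And>p. p \<in> {1..n} \<Longrightarrow> sparity (f p) (q p)"
begin

lemma ssmooth_sprod_dbar_tuple: "ssmooth (sprod n (dbar_tuple j f))"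
  by (rule ssmooth_sprod) (simp add: ssmooth_dbar_tuple f_smooth)

lemma Lie_opterm:
  assumes b: "ssmooth b" "sparity b pb"
  shows "Lie (\<alpha> + (\<Sum>p\<in>{1..n}. \<nu> p)) F (opterm n q f j b) = opterm n q f j (Lie \<alpha> F b)
    + (\<Sum>p\<in>{1..n}. sscale ((-1)^(koszul_exp n q j + pF * pb + pF * (\<Sum>s\<in>{1..<p}. q s + j s)))
        (smul b (sprod n ((dbar_tuple j f)(p := Lie (\<nu> p) F (dbar_tuple j f p))))))"
proof -
  have "Lie (\<Sum>p\<in>{1..n}. \<nu> p) F (sprod n (dbar_tuple j f)) =
      (\<Sum>p\<in>{1..n}. sscale ((-1)^(pF * (\<Sum>s\<in>{1..<p}. q s + j s)))
        (sprod n ((dbar_tuple j f)(p := Lie (\<nu> p) F (dbar_tuple j f p)))))"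
    by (rule Lie_sprod[OF F_smooth F_parity])
      (simp add: ssmooth_dbar_tuple sparity_dbar_tuple f_smooth f_parity)
  then show ?thesis
    using ssmooth_sprod_dbar_tuple
    by (simp add: opterm_def Lie_sscale Lie_smul[OF F_smooth b(1) _ F_parity b(2)] ssmooth_smul b
        sscale_add sscale_sum smul_sum smul_sscale power_add mult.assoc)
qed

lemma opterm_Lie_slot:
  assumes p: "p \<in> {1..n}"
  shows "opterm n (q(p := q p + pF)) (f(p := Lie l F (f p))) j b =
    sscale ((-1)^(koszul_exp n q j + pF * (\<Sum>s\<in>{p+1..n}. j s) + j p * pF))
      (smul b (sprod n ((dbar_tuple j f)(p := Lie (l + of_nat (j p) / 2) F (dbar_tuple j f p)))))
    + (\<Sum>r\<in>{1..j p}. sscale ((-1)^(koszul_exp n q j + pF * (\<Sum>s\<in>{p+1..n}. j s)) * dbar_lie_coef pF l (j p) r)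
        (smul b (smul ((sDbar ^^ r) (sder F)) (sprod n (dbar_tuple (j(p := j p - r)) f)))))"
proof -
  have "(sDbar ^^ j p) (Lie l F (f p)) =
      sscale ((-1)^(j p * pF)) (Lie (l + of_nat (j p) / 2) F (dbar_tuple j f p))
      + (\<Sum>r\<in>{1..j p}. sscale (dbar_lie_coef pF l (j p) r)
          (smul ((sDbar ^^ r) (sder F)) ((sDbar ^^ (j p - r)) (f p))))"
    unfolding dbar_tuple_def by (rule sDbar_pow_Lie[OF F_smooth F_parity f_smooth[OF p]])
  then show ?thesis
    by (simp add: opterm_def koszul_exp_raise_parity[OF p] dbar_tuple_fun_upd sprod_fun_upd_add[OF p]
        sprod_fun_upd_sscale[OF p] sprod_fun_upd_sum[OF p] sprod_fun_upd_smul[OF p]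
        smul_add smul_sum smul_sscale sscale_add sscale_sum power_add mult.assoc)
qed

lemma smul_sDbar_sder_vanishes:
  assumes p: "p \<in> {1..n}" and b: "sparity b pb"
    and odd: "odd (pF + r)" "odd (pb + (\<Sum>s\<in>{1..<p}. q s + j s))"
  shows "smul b (smul ((sDbar ^^ r) (sder F)) (sprod n (dbar_tuple j f))) = 0"
proof -
  let ?g = "dbar_tuple j f"
  have "sparity (sprod_list [1..<p] ?g) (sum_list (map (\<lambda>s. q s + j s) [1..<p]))"
    using p by (intro sparity_sprod_list) (simp add: sparity_dbar_tuple f_parity)
  then have "sparity (smul b (sprod_list [1..<p] ?g)) (pb + (\<Sum>s\<in>{1..<p}. q s + j s))"
    using b by (simp add: sparity_smul sum_set_upt_conv_sum_list_nat[symmetric])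
  moreover have "sparity ((sDbar ^^ r) (sder F)) (pF + r)"
    by (intro sparity_sDbar_pow sparity_sder F_parity)
  ultimately have "smul ((sDbar ^^ r) (sder F)) (smul b (sprod_list [1..<p] ?g)) = 0"
    using odd by (intro smul_odd_odd)
  moreover have "smul b (smul ((sDbar ^^ r) (sder F)) (sprod n ?g)) =
      smul (smul ((sDbar ^^ r) (sder F)) (smul b (sprod_list [1..<p] ?g)))
        (smul (?g p) (sprod_list [Suc p..<n+1] ?g))"
    by (simp only: sprod_split[OF p]) (simp add: smul_def algebra_simps del: upt_Suc)
  ultimately show ?thesis by simp
qed

lemma opterm_Lie_slot_signed:
  assumes p: "p \<in> {1..n}" and b: "ssmooth b" "sparity b pb" and hom: "(pb + msize n j) mod 2 = pA"
  shows "sscale ((-1)^(pA * pF) * (-1)^(pF * (\<Sum>s\<in>{1..<p}. q s)))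
      (opterm n (q(p := q p + pF)) (f(p := Lie l F (f p))) j b) =
    sscale ((-1)^(koszul_exp n q j + pF * pb + pF * (\<Sum>s\<in>{1..<p}. q s + j s)))
      (smul b (sprod n ((dbar_tuple j f)(p := Lie (l + of_nat (j p) / 2) F (dbar_tuple j f p)))))
    + (\<Sum>r\<in>{1..j p}. opterm n q f (j(p := j p - r))
        (sscale ((-1)^(r * (pF + pb + (\<Sum>s\<in>{1..<p}. j s))) * bcoef r (j p - r) l)
          (smul ((sDbar ^^ r) (sder F)) b)))"
proof -
  let ?D = "\<lambda>r. (sDbar ^^ r) (sder F)"
  let ?W = "\<lambda>r. smul b (smul (?D r) (sprod n (dbar_tuple (j(p := j p - r)) f)))"
  have remainder: "sscale ((-1)^(pA * pF) * (-1)^(pF * (\<Sum>s\<in>{1..<p}. q s))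
        * ((-1)^(koszul_exp n q j + pF * (\<Sum>s\<in>{p+1..n}. j s)) * dbar_lie_coef pF l (j p) r)) (?W r)
      = opterm n q f (j(p := j p - r))
          (sscale ((-1)^(r * (pF + pb + (\<Sum>s\<in>{1..<p}. j s))) * bcoef r (j p - r) l) (smul (?D r) b))"
    if r: "r \<in> {1..j p}" for r
  proof -
    have opterm_W: "opterm n q f (j(p := j p - r)) (sscale c (smul (?D r) b))
        = sscale ((-1)^(koszul_exp n q (j(p := j p - r))) * c) (?W r)" for c
      by (simp add: opterm_def smul_sscale) (simp add: smul_def algebra_simps)
    show ?thesis
    \<comment> \<open>The two signs differ by \<open>(-1)^((pF + r) (pb + ...))\<close>; when it is \<open>-1\<close>, \<open>Dbar^r(F')\<close> and
      \<open>b\<close> times the factors before slot \<open>p\<close> are both odd, so the term vanishes.\<close>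
    proof (cases "odd (pF + r) \<and> odd (pb + (\<Sum>s\<in>{1..<p}. q s + j s))")
      case True
      moreover have "(\<Sum>s\<in>{1..<p}. q s + (j(p := j p - r)) s) = (\<Sum>s\<in>{1..<p}. q s + j s)"
        by (rule sum.cong) auto
      ultimately have "?W r = 0"
        using smul_sDbar_sder_vanishes[OF p b(2)] by simp
      then show ?thesis by (simp add: opterm_W)
    next
      case False
      have "r \<le> j p" using r by simp
      show ?thesis
        unfolding opterm_W slot_remainder_sign[OF p \<open>r \<le> j p\<close> hom False] ..
    qed
  qed
  show ?thesis
    unfolding opterm_Lie_slot[OF p] sscale_add(1) sscale_sum sscale_sscale slot_main_sign[OF p hom]
    using remainder by (intro arg_cong[where f = "plus _"] sum.cong) auto
qed

lemma opLie_opterm: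
  assumes b: "ssmooth b" "sparity b pb" and hom: "b \<noteq> 0 \<Longrightarrow> (pb + msize n j) mod 2 = pA"
  shows "Lie mu F (opterm n q f j b)
      - sscale ((-1)^(pA * pF)) (\<Sum>p\<in>{1..n}. sscale ((-1)^(pF * (\<Sum>s\<in>{1..<p}. q s)))
          (opterm n (q(p := q p + pF)) (f(p := Lie (lam p) F (f p))) j b))
    = opterm n q f j (Lie (mu - (\<Sum>p\<in>{1..n}. lam p) - of_nat (msize n j) / 2) F b)
      - (\<Sum>t\<in>{1..n}. \<Sum>r\<in>{1..j t}. opterm n q f (j(t := j t - r))
          (sscale ((-1)^(r * (pF + pb + (\<Sum>s\<in>{1..<t}. j s))) * bcoef r (j t - r) (lam t))
            (smul ((sDbar ^^ r) (sder F)) b)))"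
proof (cases "b = 0")
  case True
  then show ?thesis by (simp add: opterm_zero Lie_zero)
next
  case False
  define \<alpha> where "\<alpha> = mu - (\<Sum>p\<in>{1..n}. lam p) - of_nat (msize n j) / 2"
  have "mu = \<alpha> + (\<Sum>p\<in>{1..n}. lam p + of_nat (j p) / 2)"
    by (simp add: \<alpha>_def sum.distrib msize_def sum_divide_distrib[symmetric])
  then have "Lie mu F (opterm n q f j b) = opterm n q f j (Lie \<alpha> F b)
    + (\<Sum>p\<in>{1..n}. sscale ((-1)^(koszul_exp n q j + pF * pb + pF * (\<Sum>s\<in>{1..<p}. q s + j s)))
        (smul b (sprod n ((dbar_tuple j f)(p := Lie (lam p + of_nat (j p) / 2) F (dbar_tuple j f p))))))"
    using Lie_opterm[OF b] by simp
  moreover have "sscale ((-1)^(pA * pF)) (\<Sum>p\<in>{1..n}. sscale ((-1)^(pF * (\<Sum>s\<in>{1..<p}. q s)))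
          (opterm n (q(p := q p + pF)) (f(p := Lie (lam p) F (f p))) j b))
    = (\<Sum>p\<in>{1..n}. sscale ((-1)^(koszul_exp n q j + pF * pb + pF * (\<Sum>s\<in>{1..<p}. q s + j s)))
        (smul b (sprod n ((dbar_tuple j f)(p := Lie (lam p + of_nat (j p) / 2) F (dbar_tuple j f p))))))
      + (\<Sum>t\<in>{1..n}. \<Sum>r\<in>{1..j t}. opterm n q f (j(t := j t - r))
          (sscale ((-1)^(r * (pF + pb + (\<Sum>s\<in>{1..<t}. j s))) * bcoef r (j t - r) (lam t))
            (smul ((sDbar ^^ r) (sder F)) b)))"
    unfolding sscale_sum sscale_sscale sum.distrib[symmetric]
    using opterm_Lie_slot_signed[OF _ b hom[OF False]] by (intro sum.cong) auto
  ultimately show ?thesis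
    by (simp add: \<alpha>_def)
qed

end

text \<open>The summands of \<^const>\<open>coefX\<close>, written uniformly in \<open>t\<close>: for \<open>t = 1\<close> the sum
  over \<open>{1..t-1}\<close> is empty.\<close>

definition coef_shift :: "(nat \<Rightarrow> complex) \<Rightarrow> ((nat \<Rightarrow> nat) \<Rightarrow> sfun) \<Rightarrow> ((nat \<Rightarrow> nat) \<Rightarrow> nat)
    \<Rightarrow> sfun \<Rightarrow> nat \<Rightarrow> nat \<Rightarrow> nat \<Rightarrow> (nat \<Rightarrow> nat) \<Rightarrow> sfun" where
  "coef_shift lam a pa F pF t r i =
     sscale ((-1) ^ (r * (pF + pa (i(t := i t + r)) + (\<Sum>s\<in>{1..t-1}. i s))) * bcoef r (i t) (lam t))
       (smul ((sDbar ^^ r) (sder F)) (a (i(t := i t + r))))"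

lemma coefX_eq:
  assumes "1 \<le> n"
  shows "coefX n K lam mu a pa F pF i =
    Lie (mu - (\<Sum>p\<in>{1..n}. lam p) - of_nat (msize n i) / 2) F (a i)
    - (\<Sum>t\<in>{1..n}. \<Sum>r\<in>{1..K - msize n i}. coef_shift lam a pa F pF t r i)"
proof -
  have "{1..n} = insert 1 {2..n}" using assms by auto
  then have "(\<Sum>t\<in>{1..n}. G t) = G 1 + (\<Sum>t\<in>{2..n}. G t)" for G :: "nat \<Rightarrow> sfun"
    by simp
  then show ?thesis by (simp add: coefX_def coef_shift_def Let_def algebra_simps)
qed

lemma coef_shift_lowered:
  assumes "t \<ge> 1" "r \<le> j t"
  shows "coef_shift lam a pa F pF t r (j(t := j t - r)) =
    sscale ((-1)^(r * (pF + pa j + (\<Sum>s\<in>{1..<t}. j s))) * bcoef r (j t - r) (lam t))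
      (smul ((sDbar ^^ r) (sder F)) (a j))"
proof -
  have "{1..t-1} = {1..<t}" using assms(1) by auto
  then have "(\<Sum>s\<in>{1..t-1}. (j(t := j t - r)) s) = (\<Sum>s\<in>{1..<t}. j s)"
    by (auto intro: sum.cong)
  moreover have "(j(t := j t - r))(t := (j(t := j t - r)) t + r) = j"
    using assms(2) by auto
  ultimately show ?thesis by (simp add: coef_shift_def)
qed

lemma opLie_eq_sum_opterm:
  assumes "\<forall>j\<in>idx_le n K. ssmooth (opterm n q f j (a j))"
  shows "opLie n K lam mu a pA F pF q f =
    (\<Sum>j\<in>idx_le n K. Lie mu F (opterm n q f j (a j))
      - sscale ((-1)^(pA * pF)) (\<Sum>p\<in>{1..n}. sscale ((-1)^(pF * (\<Sum>s\<in>{1..<p}. q s)))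
          (opterm n (q(p := q p + pF)) (f(p := Lie (lam p) F (f p))) j (a j))))"
proof -
  have "Lie mu F (opapp n K a q f) = (\<Sum>j\<in>idx_le n K. Lie mu F (opterm n q f j (a j)))"
    by (simp add: opapp_eq_sum_opterm Lie_sum assms)
  moreover have "(\<Sum>p\<in>{1..n}. sscale ((-1)^(pF * (\<Sum>s\<in>{1..<p}. q s)))
        (opapp n K a (q(p := q p + pF)) (f(p := Lie (lam p) F (f p)))))
      = (\<Sum>j\<in>idx_le n K. \<Sum>p\<in>{1..n}. sscale ((-1)^(pF * (\<Sum>s\<in>{1..<p}. q s)))
          (opterm n (q(p := q p + pF)) (f(p := Lie (lam p) F (f p))) j (a j)))"
    by (simp only: opapp_eq_sum_opterm sscale_sum) (rule sum.swap)
  ultimately show ?thesis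
    by (simp add: opLie_def sscale_sum sum_subtractf)
qed

lemma opapp_coefX_eq_sum:
  assumes "1 \<le> n"
  shows "opapp n K (coefX n K lam mu a pa F pF) q f =
    (\<Sum>j\<in>idx_le n K. opterm n q f j (Lie (mu - (\<Sum>p\<in>{1..n}. lam p) - of_nat (msize n j) / 2) F (a j))
      - (\<Sum>t\<in>{1..n}. \<Sum>r\<in>{1..j t}. opterm n q f (j(t := j t - r))
          (coef_shift lam a pa F pF t r (j(t := j t - r)))))"
proof -
  let ?c = "coef_shift lam a pa F pF"
  have "(\<Sum>i\<in>idx_le n K. \<Sum>t\<in>{1..n}. \<Sum>r\<in>{1..K - msize n i}. opterm n q f i (?c t r i))
      = (\<Sum>t\<in>{1..n}. \<Sum>i\<in>idx_le n K. \<Sum>r\<in>{1..K - msize n i}. opterm n q f i (?c t r i))"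
    by (rule sum.swap)
  also have "\<dots> = (\<Sum>t\<in>{1..n}. \<Sum>j\<in>idx_le n K. \<Sum>r\<in>{1..j t}.
      opterm n q f (j(t := j t - r)) (?c t r (j(t := j t - r))))"
    by (intro sum.cong refl sum_idx_le_shift)
  also have "\<dots> = (\<Sum>j\<in>idx_le n K. \<Sum>t\<in>{1..n}. \<Sum>r\<in>{1..j t}.
      opterm n q f (j(t := j t - r)) (?c t r (j(t := j t - r))))"
    by (rule sum.swap)
  finally show ?thesis
    by (simp add: opapp_eq_sum_opterm coefX_eq[OF assms] opterm_diff opterm_sum sum_subtractf)
qed

theorem proposition2p1:
  fixes n K :: nat and lam :: "nat \<Rightarrow> complex" and mu :: complex
    and a :: "(nat \<Rightarrow> nat) \<Rightarrow> sfun" and pa :: "(nat \<Rightarrow> nat) \<Rightarrow> nat" and pA :: nat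
    and F :: sfun and pF :: nat
  assumes n_pos: "1 \<le> n"
    and a_smooth: "\<And>l i. l \<le> K \<Longrightarrow> i \<in> idx n l \<Longrightarrow> smooth_sf (a i)"
    and a_par: "\<And>l i. l \<le> K \<Longrightarrow> i \<in> idx n l \<Longrightarrow> has_parity (a i) (pa i)"
    and A_par: "pA < 2"
    and A_hom: "\<And>l i. l \<le> K \<Longrightarrow> i \<in> idx n l \<Longrightarrow> a i \<noteq> 0 \<Longrightarrow> (pa i + l) mod 2 = pA"
    and F_smooth: "smooth_sf F"
    and F_par: "has_parity F pF"
  shows "\<forall>(f :: nat \<Rightarrow> sfun) (q :: nat \<Rightarrow> nat).
           (\<forall>p\<in>{1..n}. smooth_sf (f p) \<and> has_parity (f p) (q p)) \<longrightarrow>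
           opLie n K lam mu a pA F pF q f = opapp n K (coefX n K lam mu a pa F pF) q f"
proof (intro allI impI)
  fix f :: "nat \<Rightarrow> sfun" and q :: "nat \<Rightarrow> nat"
  assume f: "\<forall>p\<in>{1..n}. smooth_sf (f p) \<and> has_parity (f p) (q p)"
  have F: "ssmooth F" "sparity F pF"
    using F_smooth F_par by (simp_all add: smooth_sf_imp_ssmooth has_parity_imp_sparity)
  have f': "\<And>p. p \<in> {1..n} \<Longrightarrow> ssmooth (f p)" "\<And>p. p \<in> {1..n} \<Longrightarrow> sparity (f p) (q p)"
    using f by (simp_all add: smooth_sf_imp_ssmooth has_parity_imp_sparity)
  have a: "ssmooth (a j)" "sparity (a j) (pa j)" "a j \<noteq> 0 \<Longrightarrow> (pa j + msize n j) mod 2 = pA"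
    if "j \<in> idx_le n K" for j
    using that a_smooth a_par A_hom
    by (auto simp: idx_le_def idx_def msize_def smooth_sf_imp_ssmooth has_parity_imp_sparity)
  have smooth_terms: "\<forall>j\<in>idx_le n K. ssmooth (opterm n q f j (a j))"
    unfolding opterm_def by (intro ballI ssmooth_sscale ssmooth_smul a(1) ssmooth_sprod_dbar_tuple[OF F f'])
  have "opLie n K lam mu a pA F pF q f =
    (\<Sum>j\<in>idx_le n K. opterm n q f j (Lie (mu - (\<Sum>p\<in>{1..n}. lam p) - of_nat (msize n j) / 2) F (a j))
      - (\<Sum>t\<in>{1..n}. \<Sum>r\<in>{1..j t}. opterm n q f (j(t := j t - r))
          (sscale ((-1)^(r * (pF + pa j + (\<Sum>s\<in>{1..<t}. j s))) * bcoef r (j t - r) (lam t))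
            (smul ((sDbar ^^ r) (sder F)) (a j)))))"
  proof (subst opLie_eq_sum_opterm[OF smooth_terms], rule sum.cong[OF refl], goal_cases)
    case (1 j)
    show ?case by (rule opLie_opterm[OF F f' a[OF 1]])
  qed
  then show "opLie n K lam mu a pA F pF q f = opapp n K (coefX n K lam mu a pa F pF) q f"
    by (simp add: opapp_coefX_eq_sum[OF n_pos] coef_shift_lowered)
qed

end
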